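(* Let $l\ge 1$ be an integer and let $x(1),\dots,x(l)\in[0,1)$. Define real numbers $z(1),\dots,z(l)$ by $z(1)=x(1)$ and, for $k=1,\dots,l-1$, with $d_k=(x(k+1)-2z(k))_{\mathrm{mod}\,1}\in[0,1)$, $$z(k+1)=\begin{cases}2z(k)+d_k & \text{if } d_k\in[0,1/3),\\ 2z(k)+1/3 & \text{if } d_k\in[1/3,2/3),\\ 2z(k) & \text{if } d_k\in[2/3,1).\end{cases}$$ Let $\theta\in[0,1)$ and suppose that for every $k=1,\dots,l$ the point $(2^{k-1}\theta)_{\mathrm{mod}\,1}$ lies in the open arc $(x(k),x(k)+1/3)$ on the circle, i.e. $\big((2^{k-1}\theta)_{\mathrm{mod}\,1}-x(k)\big)_{\mathrm{mod}\,1}\in(0,1/3)$. Then $\theta$ lies in the arc on the circle $\big[z(l)/2^{l-1},\,(z(l)+1/3)/2^{l-1}\big]$ (of length $1/(3\cdot 2^{l-1})$), i.e. there is an integer $m$ with $\theta+m\in\big[z(l)/2^{l-1},(z(l)+1/3)/2^{l-1}\big]$. Consequently the estimate $\hat\theta=\big((z(l)+1/6)/2^{l-1}\big)_{\mathrm{mod}\,1}$ satisfies $|\hat\theta-\theta|_1\le 1/(3\cdot 2^{l})$.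
   Context: Points of $[0,1)$ are regarded as points on a circle of unit circumference; $(a)_{\mathrm{mod}\,1}$ denotes the representative of $a$ in $[0,1)$. An arc $[a,b]$ (or $(a,b)$) with real $a\le b$, $b-a<1$, is the set $\{t_{\mathrm{mod}\,1}: t\in[a,b]\}$ (resp. $t\in(a,b)$). For $\theta,\hat\theta\in[0,1)$, $|\hat\theta-\theta|_1=\min\big((\hat\theta-\theta)_{\mathrm{mod}\,1},(\theta-\hat\theta)_{\mathrm{mod}\,1}\big)$. *)

theory Defs
  imports "HOL-Analysis.Analysis"
begin

definition mod1 :: "real \<Rightarrow> real" where
  "mod1 a = a - of_int \<lfloor>a\<rfloor>"

definition circ_dist :: "real \<Rightarrow> real \<Rightarrow> real" where
  "circ_dist th' th = min (mod1 (th' - th)) (mod1 (th - th'))"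

text \<open>The sequence z(1), z(2), ...; zseq x k = z(k+1) (0-based shift).\<close>
fun zseq :: "(nat \<Rightarrow> real) \<Rightarrow> nat \<Rightarrow> real" where
  "zseq x 0 = x 1"
| "zseq x (Suc k) =
     (let d = mod1 (x (k + 2) - 2 * zseq x k) in
      if d < 1/3 then 2 * zseq x k + d
      else if d < 2/3 then 2 * zseq x k + 1/3
      else 2 * zseq x k)"

definition z :: "(nat \<Rightarrow> real) \<Rightarrow> nat \<Rightarrow> real" where
  "z x k = zseq x (k - 1)"

end

theory Submission
  imports Defs
begin

text \<open>Write \<open>I\<^sub>k\<close> for the arc \<open>[z(k), z(k) + 1/3]\<close>. By induction on \<open>k\<close>, some lift of
  \<open>2\<^sup>k\<^sup>-\<^sup>1\<theta>\<close> lies in \<open>I\<^sub>k\<close>. Doubling maps \<open>I\<^sub>k\<close> onto an arc of length \<open>2/3\<close> starting at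
  \<open>2z(k)\<close>, and the measurement says \<open>2\<^sup>k\<theta>\<close> also lies in \<open>(x(k+1), x(k+1) + 1/3)\<close>; the three
  cases of the recursion choose for \<open>I\<^sub>k\<^sub>+\<^sub>1\<close> an arc of length \<open>1/3\<close> containing the
  intersection of these two arcs.\<close>

lemma mod1_nonneg: "0 \<le> mod1 a"
  and mod1_less_one: "mod1 a < 1"
  unfolding mod1_def by linarith+

lemma mod1_eq_self: "0 \<le> a \<Longrightarrow> a < 1 \<Longrightarrow> mod1 a = a"
  unfolding mod1_def by (simp add: floor_eq_iff)

lemma mod1_add_of_int [simp]: "mod1 (a + of_int n) = mod1 a"
  unfolding mod1_def by simp

lemma mod1_diff_mod1 [simp]: "mod1 (mod1 a - b) = mod1 (a - b)"
proof -
  have "mod1 a - b = (a - b) + of_int (- \<lfloor>a\<rfloor>)" unfolding mod1_def by simp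
  then show ?thesis by (metis mod1_add_of_int)
qed

lemma mod1_mult_add_of_int:
  fixes c :: real
  assumes "c \<in> \<int>"
  shows "mod1 (c * (a + of_int m) - b) = mod1 (c * a - b)"
proof -
  obtain n where "c = of_int n" using assms by (rule Ints_cases)
  then have "c * (a + of_int m) - b = (c * a - b) + of_int (n * m)" by (simp add: algebra_simps)
  then show ?thesis by (metis mod1_add_of_int)
qed

definition zstep :: "real \<Rightarrow> real \<Rightarrow> real" where
  "zstep w y =
     (let d = mod1 (y - 2 * w) in
      if d < 1/3 then 2 * w + d else if d < 2/3 then 2 * w + 1/3 else 2 * w)"

lemma zseq_Suc_zstep: "zseq x (Suc k) = zstep (zseq x k) (x (k + 2))"
  by (simp add: zstep_def Let_def)

lemma zstep_arc:
  assumes "0 \<le> t - w" "t - w \<le> 1/3"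
    and "0 < mod1 (2 * t - y)" "mod1 (2 * t - y) < 1/3"
  shows "0 \<le> 2 * t - zstep w y \<and> 2 * t - zstep w y \<le> 1/3"
proof -
  define d where "d = mod1 (y - 2 * w)"
  define b where "b = mod1 (2 * t - y)"
  define N where "N = \<lfloor>y - 2 * w\<rfloor> + \<lfloor>2 * t - y\<rfloor>"
  have d: "0 \<le> d" "d < 1" unfolding d_def by (simp_all add: mod1_nonneg mod1_less_one)
  have b: "0 < b" "b < 1/3" using assms(3,4) unfolding b_def by simp_all
  have decomp: "2 * t - 2 * w = d + b + of_int N"
    unfolding d_def b_def N_def mod1_def by (simp add: algebra_simps)
  \<comment> \<open>\<open>2(t - w) - d - b\<close> is an integer in \<open>(-4/3, 2/3)\<close>, and it is \<open>-1\<close> exactly when \<open>d \<ge> 2/3\<close>\<close>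
  have N: "N = (if d < 2/3 then 0 else -1)"
  proof -
    have "(-2::real) < of_int N" using decomp assms(1,2) d b by linarith
    moreover have "of_int N < (1::real)" using decomp assms(1,2) d b by linarith
    ultimately have "N = 0 \<or> N = -1" by linarith
    then show ?thesis using decomp assms(1,2) b by auto
  qed
  have zstep: "zstep w y = (if d < 1/3 then 2 * w + d else if d < 2/3 then 2 * w + 1/3 else 2 * w)"
    unfolding zstep_def d_def Let_def ..
  consider "d < 1/3" | "1/3 \<le> d" "d < 2/3" | "2/3 \<le> d" by linarith
  then show ?thesis
  proof cases
    case 1
    then have "zstep w y = 2 * w + d" "of_int N = (0::real)" using zstep N by simp_all
    then show ?thesis using decomp b by linarith
  next
    case 2
    then have "zstep w y = 2 * w + 1/3" "of_int N = (0::real)" using zstep N by simp_all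
    then show ?thesis using decomp assms(2) b 2 by linarith
  next
    case 3
    then have "zstep w y = 2 * w" "of_int N = (-1::real)" using zstep N by simp_all
    then show ?thesis using decomp assms(1) d b by linarith
  qed
qed

lemma zseq_arc:
  assumes "\<And>k. 1 \<le> k \<Longrightarrow> k \<le> Suc j \<Longrightarrow>
             0 < mod1 (2 ^ (k - 1) * \<theta> - x k) \<and> mod1 (2 ^ (k - 1) * \<theta> - x k) < 1/3"
  shows "\<exists>m::int. 0 \<le> 2 ^ j * (\<theta> + of_int m) - zseq x j \<and>
                   2 ^ j * (\<theta> + of_int m) - zseq x j \<le> 1/3"
  using assms
proof (induction j)
  case 0
  then have "0 < mod1 (\<theta> - x 1)" "mod1 (\<theta> - x 1) < 1/3" by (auto dest: spec[of _ 1])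
  then show ?case
    by (intro exI[of _ "- \<lfloor>\<theta> - x 1\<rfloor>"]) (simp add: mod1_def)
next
  case (Suc j)
  then obtain m :: int where m: "0 \<le> 2 ^ j * (\<theta> + of_int m) - zseq x j"
      "2 ^ j * (\<theta> + of_int m) - zseq x j \<le> 1/3"
    by auto
  define t where "t = 2 ^ j * (\<theta> + of_int m)"
  have "mod1 (2 * t - x (j + 2)) = mod1 (2 ^ Suc j * \<theta> - x (j + 2))"
    unfolding t_def using mod1_mult_add_of_int[of "2 ^ Suc j" \<theta> m "x (j + 2)"]
    by (simp add: mult.assoc)
  moreover have "0 < mod1 (2 ^ Suc j * \<theta> - x (j + 2))" "mod1 (2 ^ Suc j * \<theta> - x (j + 2)) < 1/3"
    using Suc.prems[of "j + 2"] by simp_all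
  ultimately have "0 \<le> 2 * t - zseq x (Suc j) \<and> 2 * t - zseq x (Suc j) \<le> 1/3"
    using zstep_arc[of t "zseq x j" "x (j + 2)"] m unfolding t_def zseq_Suc_zstep by simp
  then show ?case unfolding t_def by (intro exI[of _ m]) (simp add: mult.assoc)
qed

lemma circ_dist_mod1_le:
  assumes "\<bar>c - (\<theta> + of_int m)\<bar> \<le> r" "r < 1"
  shows "circ_dist (mod1 c) \<theta> \<le> r"
proof -
  define e where "e = c - (\<theta> + of_int m)"
  have "mod1 c - \<theta> = e + of_int (m - \<lfloor>c\<rfloor>)" "\<theta> - mod1 c = - e + of_int (\<lfloor>c\<rfloor> - m)"
    unfolding e_def mod1_def by simp_all
  then have "mod1 (mod1 c - \<theta>) = mod1 e" "mod1 (\<theta> - mod1 c) = mod1 (- e)"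
    by (metis mod1_add_of_int)+
  moreover have "mod1 e \<le> r \<or> mod1 (- e) \<le> r"
  proof (cases "0 \<le> e")
    case True
    then have "mod1 e = e" using assms by (intro mod1_eq_self) (auto simp: e_def)
    then show ?thesis using assms by (simp add: e_def abs_le_iff)
  next
    case False
    then have "mod1 (- e) = - e" using assms by (intro mod1_eq_self) (auto simp: e_def)
    then show ?thesis using assms by (simp add: e_def abs_le_iff)
  qed
  ultimately show ?thesis unfolding circ_dist_def by linarith
qed

theorem mainTheorem1:
  fixes l :: nat and x :: "nat \<Rightarrow> real" and \<theta> :: real
  assumes "l \<ge> 1"
    and "\<And>k. 1 \<le> k \<Longrightarrow> k \<le> l \<Longrightarrow> 0 \<le> x k \<and> x k < 1"
    and "0 \<le> \<theta>" and "\<theta> < 1"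
    and "\<And>k. 1 \<le> k \<Longrightarrow> k \<le> l \<Longrightarrow>
           0 < mod1 (mod1 (2 ^ (k - 1) * \<theta>) - x k) \<and>
           mod1 (mod1 (2 ^ (k - 1) * \<theta>) - x k) < 1/3"
  shows "(\<exists>m::int. z x l / 2 ^ (l - 1) \<le> \<theta> + of_int m \<and>
                     \<theta> + of_int m \<le> (z x l + 1/3) / 2 ^ (l - 1))
         \<and> circ_dist (mod1 ((z x l + 1/6) / 2 ^ (l - 1))) \<theta> \<le> 1 / (3 * 2 ^ l)"
proof -
  define P :: real where "P = 2 ^ (l - 1)"
  have P: "P \<ge> 1" "(2::real) ^ l = 2 * P"
    unfolding P_def using \<open>l \<ge> 1\<close> by (simp_all add: power_Suc[symmetric])
  obtain m :: int where m: "0 \<le> P * (\<theta> + of_int m) - z x l" "P * (\<theta> + of_int m) - z x l \<le> 1/3"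
    using zseq_arc[of "l - 1" \<theta> x] assms(1,5) unfolding P_def z_def by auto
  have arc: "z x l / P \<le> \<theta> + of_int m" "\<theta> + of_int m \<le> (z x l + 1/3) / P"
    using m P(1) by (simp_all add: pos_divide_le_eq pos_le_divide_eq mult.commute)
  have "\<bar>(z x l + 1/6) / P - (\<theta> + of_int m)\<bar> \<le> 1 / (3 * 2 ^ l)"
    using m P by (simp add: abs_le_iff divide_simps algebra_simps)
  moreover have "1 / (3 * 2 ^ l) < (1::real)" using P by simp
  ultimately have "circ_dist (mod1 ((z x l + 1/6) / P)) \<theta> \<le> 1 / (3 * 2 ^ l)"
    by (rule circ_dist_mod1_le)
  with arc show ?thesis unfolding P_def[symmetric] by blast
qed

end
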